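(* Let $l\in\{1,\dots,r\}$ and let $i=i(l)$ be the unique positive integer with $0\le \sum_{j=i}^nM_j-lp<M_i$. Then the $\mathrm{id}$-leading term of $I^{[l]}(z)$ equals $$(-1)^{\sum_{j=1}^iM_j}\,\frac{\Gamma_{\mathbb{F}_p}(M_i+1)\,\Gamma_{\mathbb{F}_p}\big(\sum_{j=i+1}^nM_j-(l-1)p+1\big)}{\Gamma_{\mathbb{F}_p}\big(\sum_{j=i}^nM_j-lp+1\big)}\Big(\frac{\sum_{j=i+1}^ne_j}{\sum_{j=i+1}^nM_j}-\frac{e_i}{M_i}\Big)\,z_1^{M_1}\cdots z_{i-1}^{M_{i-1}}z_i^{\sum_{j=i}^nM_j-lp}.$$
   Context: Let $p,q$ be primes and $n$ a positive integer with $p>n\ge2$, $p>q$. Fix positive integers $m_1,\dots,m_n<q$; $M_i$ is the least positive integer with $M_i\equiv -m_iq^{-1}\pmod p$ (so $1\le M_i\le p-1$), and in formulas over $\mathbb{F}_p$ denotes its residue. $e_1,\dots,e_n$ is the standard basis of $\mathbb{F}_p^n$. With $\Phi_p(x,z)=\prod_{i=1}^n(x-z_i)^{M_i}$, for a positive integer $l$, $I^{[l]}(z)\in\mathbb{F}_p[z_1,\dots,z_n]^n$ is the coefficient of $x^{lp-1}$ in $\big(\Phi_p/(x-z_1),\dots,\Phi_p/(x-z_n)\big)$. $r=\lfloor (M_1+\dots+M_n)/p\rfloor$. Monomials $z_1^{d_1}\cdots z_n^{d_n}$ are ordered lexicographically by exponent vectors $(d_1,\dots,d_n)$ (so $z_1>z_2>\dots>z_n$);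 the $\mathrm{id}$-leading term of a nonzero $f\in\mathbb{F}_p[z]^n$ is $a\,z^d$ where $z^d$ is the largest monomial occurring in $f$ with nonzero coefficient $a\in\mathbb{F}_p^n$. For an integer $1\le x\le p$, $\Gamma_{\mathbb{F}_p}(x)$ is the residue of $(-1)^{x-1}(x-1)!$. *)

theory Defs
  imports "HOL-Library.Poly_Mapping" "Berlekamp_Zassenhaus.Finite_Field"
begin

text \<open>Multivariate polynomials over a ring 'a in variables indexed by nat:
  variable 0 is x, variable i (1 \<le> i \<le> n) is z_i.\<close>

type_synonym 'a mpoly = "(nat \<Rightarrow>\<^sub>0 nat) \<Rightarrow>\<^sub>0 'a"

definition Var :: "nat \<Rightarrow> 'a::comm_ring_1 mpoly" where
  "Var j = Poly_Mapping.single (Poly_Mapping.single j 1) 1"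

definition Mres :: "'p::prime_card itself \<Rightarrow> nat \<Rightarrow> nat \<Rightarrow> nat" where
  "Mres TYPE('p) q mi = (LEAST M::nat. 0 < M \<and>
      (of_nat M :: 'p mod_ring) = - of_nat mi / of_nat q)"

text \<open>Phi_p(x,z) / (x - z_k) = (x - z_k)^(M_k - 1) * prod_{i \<noteq> k} (x - z_i)^(M_i).\<close>
definition Phi_div :: "nat \<Rightarrow> (nat \<Rightarrow> nat) \<Rightarrow> nat \<Rightarrow> 'a::comm_ring_1 mpoly" where
  "Phi_div n M k = (Var 0 - Var k) ^ (M k - 1) *
      (\<Prod>i\<in>{1..n} - {k}. (Var 0 - Var i) ^ (M i))"

text \<open>I^[l]: component k (1 \<le> k \<le> n) evaluated at the z-monomial d (an exponent
  vector supported in {1..n}) gives the coefficient of x^(lp-1) z^d in Phi_p/(x - z_k).\<close>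
definition Ivec :: "nat \<Rightarrow> (nat \<Rightarrow> nat) \<Rightarrow> nat \<Rightarrow> nat \<Rightarrow> nat \<Rightarrow> (nat \<Rightarrow>\<^sub>0 nat) \<Rightarrow> 'a::comm_ring_1" where
  "Ivec n M p l k d = Poly_Mapping.lookup (Phi_div n M k) (Poly_Mapping.single 0 (l * p - 1) + d)"

definition zmonom :: "nat \<Rightarrow> (nat \<Rightarrow>\<^sub>0 nat) \<Rightarrow> bool" where
  "zmonom n d \<longleftrightarrow> Poly_Mapping.keys d \<subseteq> {1..n}"

definition lex_less :: "nat \<Rightarrow> (nat \<Rightarrow>\<^sub>0 nat) \<Rightarrow> (nat \<Rightarrow>\<^sub>0 nat) \<Rightarrow> bool" where
  "lex_less n d d' \<longleftrightarrow> (\<exists>j\<in>{1..n}. (\<forall>i\<in>{1..<j}. Poly_Mapping.lookup d i = Poly_Mapping.lookup d' i) \<and> Poly_Mapping.lookup d j < Poly_Mapping.lookup d' j)"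

text \<open>The id-leading term of the vector polynomial F (components k \<in> {1..n},
  F k d = coefficient of z^d in component k) is a z^D, a \<in> F^n.\<close>
definition id_leading_term :: "nat \<Rightarrow> (nat \<Rightarrow> (nat \<Rightarrow>\<^sub>0 nat) \<Rightarrow> 'a::zero) \<Rightarrow> (nat \<Rightarrow> 'a) \<Rightarrow> (nat \<Rightarrow>\<^sub>0 nat) \<Rightarrow> bool" where
  "id_leading_term n F a D \<longleftrightarrow>
     zmonom n D \<and> (\<exists>k\<in>{1..n}. a k \<noteq> 0) \<and> (\<forall>k\<in>{1..n}. F k D = a k) \<and>
     (\<forall>d. zmonom n d \<and> lex_less n D d \<longrightarrow> (\<forall>k\<in>{1..n}. F k d = 0))"

definition GammaF :: "nat \<Rightarrow> 'a::comm_ring_1" where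
  "GammaF x = (-1) ^ (x - 1) * of_nat (fact (x - 1))"

end

theory Submission
  imports Defs "HOL-Number_Theory.Residues"
begin

(* By the binomial theorem, Phi_p/(x - z_k) = prod_j (x - z_j)^(E_j), with E = M except E_k = M_k - 1,
   has coefficient prod_j (-1)^(d_j) binom(E_j, d_j) at x^(lp-1) z^d when d <= E and |d| = |E| - (lp - 1),
   and 0 otherwise.  So every monomial in the support of I^[l] has d <= M and total degree |M| - lp, and
   the lexicographically largest such exponent is the greedy one z_1^(M_1) ... z_(i-1)^(M_(i-1)) z_i^s,
   s = M_i + ... + M_n - lp < M_i.  There the k-th coefficient vanishes for k < i and is
   (-1)^(M_1 + ... + M_(i-1) + s) times binom(M_i - 1, s) for k = i, resp. binom(M_i, s) for k > i.
   Wilson's theorem, in the reflection form Gamma(p - n) Gamma(n + 1) = (-1)^(n+1) over F_p, turns these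
   binomials into the stated Gamma-quotient, using M_(i+1) + ... + M_n = -(M_i - s) in F_p. *)

lemma Var_power: "(Var j :: 'a::comm_ring_1 mpoly) ^ k = Poly_Mapping.single (Poly_Mapping.single j k) 1"
proof (induction k)
  case (Suc k)
  then show ?case by (simp add: Var_def mult_single flip: single_add)
qed simp

lemma single_zero_power: "Poly_Mapping.single 0 c ^ k = Poly_Mapping.single 0 (c ^ k)"
  by (induction k) (simp_all add: mult_single)

lemma minus_one_power_mpoly: "(- 1 :: 'a::comm_ring_1 mpoly) ^ k = Poly_Mapping.single 0 ((- 1) ^ k)"
  by (simp add: single_uminus flip: single_zero_power)

lemma Var_diff_power:
  "(Var x - Var j :: 'a::comm_ring_1 mpoly) ^ e =
   (\<Sum>a\<le>e. Poly_Mapping.single (Poly_Mapping.single x (e - a) + Poly_Mapping.single j a)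
      ((- 1) ^ a * of_nat (e choose a)))"
proof -
  have "(Var x - Var j :: 'a mpoly) ^ e = (- Var j + Var x) ^ e"
    by (simp only: diff_conv_add_uminus add.commute)
  also have "\<dots> = (\<Sum>a\<le>e. of_nat (e choose a) * (- Var j) ^ a * Var x ^ (e - a))"
    by (rule binomial_ring)
  also have "\<dots> = (\<Sum>a\<le>e. Poly_Mapping.single (Poly_Mapping.single x (e - a) + Poly_Mapping.single j a)
      ((- 1) ^ a * of_nat (e choose a)))"
  proof (rule sum.cong[OF refl])
    fix a
    have "(of_nat (e choose a) :: 'a mpoly) = Poly_Mapping.single 0 (of_nat (e choose a))"
      by simp
    moreover have "(- Var j :: 'a mpoly) ^ a =
        Poly_Mapping.single 0 ((- 1) ^ a) * Poly_Mapping.single (Poly_Mapping.single j a) 1"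
      by (subst power_minus) (simp only: minus_one_power_mpoly Var_power)
    ultimately show "of_nat (e choose a) * (- Var j :: 'a mpoly) ^ a * Var x ^ (e - a) =
      Poly_Mapping.single (Poly_Mapping.single x (e - a) + Poly_Mapping.single j a) ((- 1) ^ a * of_nat (e choose a))"
      by (simp only: Var_power mult_single mult.assoc) (simp add: add.commute mult.commute)
  qed
  finally show ?thesis .
qed

lemma prod_single:
  "finite J \<Longrightarrow> (\<Prod>j\<in>J. Poly_Mapping.single (k j) (c j :: 'a::comm_semiring_1))
     = Poly_Mapping.single (\<Sum>j\<in>J. k j) (\<Prod>j\<in>J. c j)"
  by (induction J rule: finite_induct) (simp_all add: mult_single)

lemma prod_Var_diff_power_eq_sum_PiE:
  fixes E :: "nat \<Rightarrow> nat"
  assumes "finite J"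
  shows "(\<Prod>j\<in>J. (Var x - Var j) ^ E j :: 'a::comm_ring_1 mpoly) =
    (\<Sum>g\<in>PiE J (\<lambda>j. {..E j}).
      Poly_Mapping.single (\<Sum>j\<in>J. Poly_Mapping.single x (E j - g j) + Poly_Mapping.single j (g j))
        (\<Prod>j\<in>J. (- 1) ^ g j * of_nat (E j choose g j)))"
  unfolding Var_diff_power using assms by (simp add: prod_sum_PiE prod_single)

lemma lookup_sum_single_single:
  fixes E g :: "nat \<Rightarrow> nat"
  assumes "finite J" "x \<notin> J"
  shows "Poly_Mapping.lookup (\<Sum>j\<in>J. Poly_Mapping.single x (E j - g j) + Poly_Mapping.single j (g j)) y =
    (if y = x then \<Sum>j\<in>J. E j - g j else if y \<in> J then g y else 0)"
  using assms by (auto simp: lookup_sum lookup_add lookup_single when_def sum.distrib)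

lemma sum_single_single_eq_iff:
  fixes E g :: "nat \<Rightarrow> nat"
  assumes J: "finite J" "x \<notin> J" and g: "g \<in> PiE J (\<lambda>j. {..E j})"
  shows "(\<Sum>j\<in>J. Poly_Mapping.single x (E j - g j) + Poly_Mapping.single j (g j)) = \<nu> \<longleftrightarrow>
    g = restrict (Poly_Mapping.lookup \<nu>) J \<and> Poly_Mapping.keys \<nu> \<subseteq> insert x J \<and>
    (\<forall>j\<in>J. Poly_Mapping.lookup \<nu> j \<le> E j) \<and> Poly_Mapping.lookup \<nu> x = (\<Sum>j\<in>J. E j - Poly_Mapping.lookup \<nu> j)"
    (is "?mon = \<nu> \<longleftrightarrow> ?rhs")
proof
  assume "?mon = \<nu>"
  then have \<nu>: "Poly_Mapping.lookup \<nu> y = (if y = x then \<Sum>j\<in>J. E j - g j else if y \<in> J then g y else 0)"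
    for y
    using lookup_sum_single_single[OF J, of E g y] by simp
  show ?rhs
    using g J(2) by (auto simp: \<nu> in_keys_iff PiE_iff extensional_def split: if_splits intro!: sum.cong)
next
  assume ?rhs
  then show "?mon = \<nu>"
    using J by (intro poly_mapping_eqI) (auto simp: lookup_sum_single_single in_keys_iff intro!: sum.cong)
qed

lemma lookup_prod_Var_diff_power:
  fixes E :: "nat \<Rightarrow> nat"
  assumes J: "finite J" "x \<notin> J"
  shows "Poly_Mapping.lookup (\<Prod>j\<in>J. (Var x - Var j) ^ E j :: 'a::comm_ring_1 mpoly) \<nu> =
    (if Poly_Mapping.keys \<nu> \<subseteq> insert x J \<and> (\<forall>j\<in>J. Poly_Mapping.lookup \<nu> j \<le> E j) \<and>
        Poly_Mapping.lookup \<nu> x = (\<Sum>j\<in>J. E j - Poly_Mapping.lookup \<nu> j)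
     then \<Prod>j\<in>J. (- 1) ^ Poly_Mapping.lookup \<nu> j * of_nat (E j choose Poly_Mapping.lookup \<nu> j)
     else 0)"
proof -
  define cond where "cond \<longleftrightarrow> Poly_Mapping.keys \<nu> \<subseteq> insert x J \<and>
    (\<forall>j\<in>J. Poly_Mapping.lookup \<nu> j \<le> E j) \<and>
    Poly_Mapping.lookup \<nu> x = (\<Sum>j\<in>J. E j - Poly_Mapping.lookup \<nu> j)"
  define c :: "(nat \<Rightarrow> nat) \<Rightarrow> 'a" where
    "c g = (\<Prod>j\<in>J. (- 1) ^ g j * of_nat (E j choose g j))" for g
  define G where "G = PiE J (\<lambda>j. {..E j})"
  define g0 where "g0 = restrict (Poly_Mapping.lookup \<nu>) J"
  have "Poly_Mapping.lookup (\<Prod>j\<in>J. (Var x - Var j) ^ E j :: 'a mpoly) \<nu> =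
      (\<Sum>g\<in>G. if g = g0 \<and> cond then c g else 0)"
    unfolding prod_Var_diff_power_eq_sum_PiE[OF J(1)] using J
    by (auto simp: lookup_sum lookup_single when_def sum_single_single_eq_iff G_def g0_def cond_def c_def
        intro!: sum.cong)
  also have "\<dots> = (if cond then c g0 else 0)"
  proof (cases cond)
    case True
    then have "g0 \<in> G" by (auto simp: G_def g0_def cond_def)
    with True J(1) show ?thesis by (simp add: G_def sum.delta finite_PiE)
  next
    case False
    then show ?thesis by simp
  qed
  finally show ?thesis
    unfolding c_def g0_def cond_def by (auto intro!: prod.cong)
qed

lemma Phi_div_eq_prod:
  assumes "k \<in> {1..n}"
  shows "Phi_div n M k = (\<Prod>j\<in>{1..n}. (Var 0 - Var j) ^ (M(k := M k - 1)) j)"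
proof -
  have "(\<Prod>j\<in>{1..n}. (Var 0 - Var j) ^ (M(k := M k - 1)) j) =
      (Var 0 - Var k) ^ (M k - 1) * (\<Prod>j\<in>{1..n} - {k}. (Var 0 - Var j) ^ (M(k := M k - 1)) j :: 'a::comm_ring_1 mpoly)"
    using assms by (simp add: prod.remove)
  also have "\<dots> = Phi_div n M k"
    unfolding Phi_div_def by (intro arg_cong2[where f = "(*)"] prod.cong) auto
  finally show ?thesis ..
qed

lemma Ivec_eq:
  assumes k: "k \<in> {1..n}" and d: "zmonom n d"
  shows "(Ivec n M p l k d :: 'a::comm_ring_1) =
    (if (\<forall>j\<in>{1..n}. Poly_Mapping.lookup d j \<le> (M(k := M k - 1)) j) \<and>
        l * p - 1 = (\<Sum>j\<in>{1..n}. (M(k := M k - 1)) j - Poly_Mapping.lookup d j)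
     then \<Prod>j\<in>{1..n}. (- 1) ^ Poly_Mapping.lookup d j *
       of_nat ((M(k := M k - 1)) j choose Poly_Mapping.lookup d j)
     else 0)"
proof -
  define E where "E = M(k := M k - 1)"
  define \<nu> where "\<nu> = Poly_Mapping.single 0 (l * p - 1) + d"
  have d0: "Poly_Mapping.lookup d 0 = 0"
    using d by (auto simp: zmonom_def in_keys_iff)
  have \<nu>0: "Poly_Mapping.lookup \<nu> 0 = l * p - 1"
    by (simp add: \<nu>_def lookup_add d0)
  have \<nu>j: "Poly_Mapping.lookup \<nu> j = Poly_Mapping.lookup d j" if "j \<in> {1..n}" for j
    using that by (simp add: \<nu>_def lookup_add lookup_single)
  have "Poly_Mapping.keys \<nu> \<subseteq> insert 0 (Poly_Mapping.keys d)"
    using keys_add[of "Poly_Mapping.single 0 (l * p - 1)" d] by (auto simp: \<nu>_def split: if_splits)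
  then have keys: "Poly_Mapping.keys \<nu> \<subseteq> insert 0 {1..n}"
    using d unfolding zmonom_def by blast
  have "(Ivec n M p l k d :: 'a) = Poly_Mapping.lookup (\<Prod>j\<in>{1..n}. (Var 0 - Var j) ^ E j :: 'a mpoly) \<nu>"
    unfolding Ivec_def \<nu>_def E_def Phi_div_eq_prod[OF k] ..
  also have "\<dots> = (if (\<forall>j\<in>{1..n}. Poly_Mapping.lookup \<nu> j \<le> E j) \<and>
        l * p - 1 = (\<Sum>j\<in>{1..n}. E j - Poly_Mapping.lookup \<nu> j)
     then \<Prod>j\<in>{1..n}. (- 1) ^ Poly_Mapping.lookup \<nu> j * of_nat (E j choose Poly_Mapping.lookup \<nu> j)
     else 0)"
    using keys by (simp add: lookup_prod_Var_diff_power \<nu>0)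
  also have "\<dots> = (if (\<forall>j\<in>{1..n}. Poly_Mapping.lookup d j \<le> E j) \<and>
        l * p - 1 = (\<Sum>j\<in>{1..n}. E j - Poly_Mapping.lookup d j)
     then \<Prod>j\<in>{1..n}. (- 1) ^ Poly_Mapping.lookup d j * of_nat (E j choose Poly_Mapping.lookup d j)
     else 0)"
  proof -
    have "(\<forall>j\<in>{1..n}. Poly_Mapping.lookup \<nu> j \<le> E j) \<longleftrightarrow> (\<forall>j\<in>{1..n}. Poly_Mapping.lookup d j \<le> E j)"
      using \<nu>j by auto
    moreover have "(\<Sum>j\<in>{1..n}. E j - Poly_Mapping.lookup \<nu> j) = (\<Sum>j\<in>{1..n}. E j - Poly_Mapping.lookup d j)"
      using \<nu>j by (intro sum.cong) auto
    moreover have "(\<Prod>j\<in>{1..n}. (- 1) ^ Poly_Mapping.lookup \<nu> j * of_nat (E j choose Poly_Mapping.lookup \<nu> j)) =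
        (\<Prod>j\<in>{1..n}. (- 1) ^ Poly_Mapping.lookup d j * (of_nat (E j choose Poly_Mapping.lookup d j) :: 'a))"
      using \<nu>j by (intro prod.cong) auto
    ultimately show ?thesis by (simp only:)
  qed
  finally show ?thesis unfolding E_def .
qed

definition prefix_monom :: "(nat \<Rightarrow> nat) \<Rightarrow> nat \<Rightarrow> nat \<Rightarrow> (nat \<Rightarrow>\<^sub>0 nat)" where
  "prefix_monom M i s = (\<Sum>j\<in>{1..<i}. Poly_Mapping.single j (M j)) + Poly_Mapping.single i s"

lemma lookup_prefix_monom:
  "Poly_Mapping.lookup (prefix_monom M i s) j = (if j \<in> {1..<i} then M j else if j = i then s else 0)"
  by (auto simp: prefix_monom_def lookup_add lookup_sum lookup_single when_def)

lemma zmonom_prefix_monom: "i \<in> {1..n} \<Longrightarrow> zmonom n (prefix_monom M i s)"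
  by (auto simp: zmonom_def in_keys_iff lookup_prefix_monom split: if_splits)

lemma sum_lookup_prefix_monom:
  assumes "1 \<le> i" "i \<le> t"
  shows "(\<Sum>j\<in>{1..t}. Poly_Mapping.lookup (prefix_monom M i s) j) = (\<Sum>j\<in>{1..<i}. M j) + s"
proof -
  have "Poly_Mapping.lookup (prefix_monom M i s) j = (if j \<in> {1..<i} then M j else 0) + (if j = i then s else 0)" for j
    by (simp add: lookup_prefix_monom)
  then have "(\<Sum>j\<in>{1..t}. Poly_Mapping.lookup (prefix_monom M i s) j) =
      (\<Sum>j\<in>{1..t} \<inter> {1..<i}. M j) + (\<Sum>j\<in>{1..t}. if j = i then s else 0)"
    by (simp add: sum.distrib sum.inter_restrict)
  moreover have "{1..t} \<inter> {1..<i} = {1..<i}" using assms(2) by auto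
  ultimately show ?thesis using assms by simp
qed

(* At the first index t where d exceeds the prefix monomial, t < i is excluded by d_t <= M_t, and
   t >= i would make the partial degree d_1 + ... + d_t exceed the total degree. *)
lemma not_lex_less_prefix_monom:
  assumes i: "i \<in> {1..n}"
    and le: "\<forall>j\<in>{1..n}. Poly_Mapping.lookup d j \<le> M j"
    and sum: "(\<Sum>j\<in>{1..n}. Poly_Mapping.lookup d j) = (\<Sum>j\<in>{1..<i}. M j) + s"
  shows "\<not> lex_less n (prefix_monom M i s) d"
proof
  assume "lex_less n (prefix_monom M i s) d"
  then obtain t where t: "t \<in> {1..n}"
    and eq: "\<forall>j\<in>{1..<t}. Poly_Mapping.lookup (prefix_monom M i s) j = Poly_Mapping.lookup d j"
    and less: "Poly_Mapping.lookup (prefix_monom M i s) t < Poly_Mapping.lookup d t"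
    unfolding lex_less_def by blast
  show False
  proof (cases "t < i")
    case True
    have "Poly_Mapping.lookup d t \<le> M t" using le t by blast
    with True t less show False by (simp add: lookup_prefix_monom)
  next
    case False
    have split: "(\<Sum>j\<in>{1..t}. f j) = (\<Sum>j\<in>{1..<t}. f j) + f t" for f :: "nat \<Rightarrow> nat"
    proof -
      have "{1..t} = insert t {1..<t}" using t by auto
      then show ?thesis by simp
    qed
    have "(\<Sum>j\<in>{1..t}. Poly_Mapping.lookup (prefix_monom M i s) j) < (\<Sum>j\<in>{1..t}. Poly_Mapping.lookup d j)"
    proof -
      have "(\<Sum>j\<in>{1..<t}. Poly_Mapping.lookup (prefix_monom M i s) j) = (\<Sum>j\<in>{1..<t}. Poly_Mapping.lookup d j)"
        using eq by (intro sum.cong) auto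
      then show ?thesis unfolding split using less by linarith
    qed
    also have "\<dots> \<le> (\<Sum>j\<in>{1..n}. Poly_Mapping.lookup d j)"
      using t by (intro sum_mono2) auto
    also have "\<dots> = (\<Sum>j\<in>{1..t}. Poly_Mapping.lookup (prefix_monom M i s) j)"
      unfolding sum using False i by (intro sum_lookup_prefix_monom[symmetric]) auto
    finally show False by simp
  qed
qed

lemma sum_fun_upd_decrement:
  fixes M :: "'a \<Rightarrow> nat"
  assumes "finite A" "k \<in> A" "0 < M k"
  shows "(\<Sum>j\<in>A. (M(k := M k - 1)) j) + 1 = (\<Sum>j\<in>A. M j)"
proof -
  have "(\<Sum>j\<in>A - {k}. (M(k := M k - 1)) j) = (\<Sum>j\<in>A - {k}. M j)"
    by (intro sum.cong) auto
  then show ?thesis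
    using sum.remove[OF assms(1,2), of M] sum.remove[OF assms(1,2), of "M(k := M k - 1)"] assms(3)
    by simp
qed

lemma diff_one_eq_sum_diff_decrement_iff:
  fixes M d :: "nat \<Rightarrow> nat"
  assumes "k \<in> {1..n}" "0 < M k" "0 < N" and le: "\<forall>j\<in>{1..n}. d j \<le> (M(k := M k - 1)) j"
  shows "N - 1 = (\<Sum>j\<in>{1..n}. (M(k := M k - 1)) j - d j) \<longleftrightarrow> (\<Sum>j\<in>{1..n}. d j) + N = (\<Sum>j\<in>{1..n}. M j)"
proof -
  have "(\<Sum>j\<in>{1..n}. (M(k := M k - 1)) j - d j) = (\<Sum>j\<in>{1..n}. (M(k := M k - 1)) j) - (\<Sum>j\<in>{1..n}. d j)"
    using le by (intro sum_subtractf_nat) auto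
  moreover have "(\<Sum>j\<in>{1..n}. d j) \<le> (\<Sum>j\<in>{1..n}. (M(k := M k - 1)) j)"
    using le by (intro sum_mono) auto
  moreover have "(\<Sum>j\<in>{1..n}. (M(k := M k - 1)) j) + 1 = (\<Sum>j\<in>{1..n}. M j)"
    using assms(1,2) by (intro sum_fun_upd_decrement) auto
  ultimately show ?thesis using \<open>0 < N\<close> by linarith
qed

lemma Ivec_neq_0_imp:
  assumes k: "k \<in> {1..n}" and d: "zmonom n d" and "0 < M k" "0 < l * p"
    and "(Ivec n M p l k d :: 'a::comm_ring_1) \<noteq> 0"
  shows "(\<forall>j\<in>{1..n}. Poly_Mapping.lookup d j \<le> M j) \<and>
    (\<Sum>j\<in>{1..n}. Poly_Mapping.lookup d j) + l * p = (\<Sum>j\<in>{1..n}. M j)"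
proof -
  define E where "E = M(k := M k - 1)"
  have le: "\<forall>j\<in>{1..n}. Poly_Mapping.lookup d j \<le> E j"
    and deg: "l * p - 1 = (\<Sum>j\<in>{1..n}. E j - Poly_Mapping.lookup d j)"
    using assms(5) unfolding Ivec_eq[OF k d] E_def[symmetric] by argo+
  have "E j \<le> M j" for j by (simp add: E_def)
  with le have "\<forall>j\<in>{1..n}. Poly_Mapping.lookup d j \<le> M j" using le_trans by blast
  moreover have "(\<Sum>j\<in>{1..n}. Poly_Mapping.lookup d j) + l * p = (\<Sum>j\<in>{1..n}. M j)"
    using deg unfolding E_def diff_one_eq_sum_diff_decrement_iff[OF k assms(3,4) le[unfolded E_def]] .
  ultimately show ?thesis ..
qed

lemma Ivec_eq_0_above_prefix_monom:
  assumes M: "\<forall>j\<in>{1..n}. 0 < M j" and i: "i \<in> {1..n}" and "0 < l * p"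
    and s: "s + l * p = (\<Sum>j\<in>{i..n}. M j)"
    and k: "k \<in> {1..n}" and d: "zmonom n d" and above: "lex_less n (prefix_monom M i s) d"
  shows "(Ivec n M p l k d :: 'a::comm_ring_1) = 0"
proof (rule ccontr)
  assume "(Ivec n M p l k d :: 'a) \<noteq> 0"
  then have "(\<forall>j\<in>{1..n}. Poly_Mapping.lookup d j \<le> M j) \<and>
      (\<Sum>j\<in>{1..n}. Poly_Mapping.lookup d j) + l * p = (\<Sum>j\<in>{1..n}. M j)"
    using k M \<open>0 < l * p\<close> by (intro Ivec_neq_0_imp[OF k d]) auto
  moreover have "(\<Sum>j\<in>{1..n}. M j) = (\<Sum>j\<in>{1..<i}. M j) + s + l * p"
    using sum.atLeastLessThan_concat[of 1 i "Suc n" M] i s by (simp add: atLeastLessThanSuc_atLeastAtMost)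
  ultimately have "\<not> lex_less n (prefix_monom M i s) d"
    using i by (intro not_lex_less_prefix_monom) auto
  with above show False by contradiction
qed

lemma Ivec_prefix_monom_below:
  assumes "0 < M k" and i: "i \<in> {1..n}" and k: "k \<in> {1..n}" "k < i"
  shows "(Ivec n M p l k (prefix_monom M i s) :: 'a::comm_ring_1) = 0"
proof -
  have "\<not> Poly_Mapping.lookup (prefix_monom M i s) k \<le> (M(k := M k - 1)) k"
    using assms by (simp add: lookup_prefix_monom)
  then show ?thesis
    unfolding Ivec_eq[OF k(1) zmonom_prefix_monom[OF i]] using k(1) by (intro if_not_P) blast
qed

lemma Ivec_prefix_monom:
  assumes M: "\<forall>j\<in>{1..n}. 0 < M j" and i: "i \<in> {1..n}" and k: "k \<in> {1..n}" "i \<le> k"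
    and s: "s < M i" "s + l * p = (\<Sum>j\<in>{i..n}. M j)" and "0 < l * p"
  shows "(Ivec n M p l k (prefix_monom M i s) :: 'a::comm_ring_1) =
    (- 1) ^ ((\<Sum>j\<in>{1..<i}. M j) + s) * of_nat ((if k = i then M i - 1 else M i) choose s)"
proof -
  define D where "D = prefix_monom M i s"
  define E where "E = M(k := M k - 1)"
  have zD: "zmonom n D" unfolding D_def using i by (rule zmonom_prefix_monom)
  have le: "\<forall>j\<in>{1..n}. Poly_Mapping.lookup D j \<le> E j"
    using k(2) s(1) by (auto simp: D_def E_def lookup_prefix_monom)
  have sum_D: "(\<Sum>j\<in>{1..n}. Poly_Mapping.lookup D j) + l * p = (\<Sum>j\<in>{1..n}. M j)"
    using sum.atLeastLessThan_concat[of 1 i "Suc n" M] sum_lookup_prefix_monom[of i n M s] i s(2)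
    by (simp add: D_def atLeastLessThanSuc_atLeastAtMost)
  have Mk: "0 < M k" using M k(1) by blast
  have deg: "l * p - 1 = (\<Sum>j\<in>{1..n}. E j - Poly_Mapping.lookup D j)"
    using sum_D unfolding E_def diff_one_eq_sum_diff_decrement_iff[OF k(1) Mk \<open>0 < l * p\<close> le[unfolded E_def]] .
  define f where "f j = (- 1) ^ Poly_Mapping.lookup D j * (of_nat (E j choose Poly_Mapping.lookup D j) :: 'a)" for j
  have "(\<Prod>j\<in>{1..n}. f j) = (\<Prod>j\<in>{1..<i}. f j) * (f i * (\<Prod>j\<in>{Suc i..n}. f j))"
    using prod.atLeastLessThan_concat[of 1 i "Suc n" f] prod.atLeast_Suc_atMost[of i n f] i
    by (simp add: atLeastLessThanSuc_atLeastAtMost)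
  also have "(\<Prod>j\<in>{1..<i}. f j) = (\<Prod>j\<in>{1..<i}. (- 1) ^ M j)"
    using k(2) by (intro prod.cong) (auto simp: f_def D_def E_def lookup_prefix_monom)
  also have "\<dots> = (- 1) ^ (\<Sum>j\<in>{1..<i}. M j)"
    by (simp add: power_sum)
  also have "(\<Prod>j\<in>{Suc i..n}. f j) = 1"
    by (intro prod.neutral) (auto simp: f_def D_def lookup_prefix_monom)
  also have "f i = (- 1) ^ s * of_nat ((if k = i then M i - 1 else M i) choose s)"
    by (simp add: f_def D_def E_def lookup_prefix_monom)
  finally show ?thesis
    using le deg unfolding D_def[symmetric] Ivec_eq[OF k(1) zD] E_def[symmetric] f_def by (simp add: power_add)
qed

lemma of_nat_mod_ring_neq_0:
  assumes "0 < x" "x < CARD('p::prime_card)"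
  shows "(of_nat x :: 'p mod_ring) \<noteq> 0"
  using assms by (auto simp: of_nat_eq_0_iff_char_dvd dest: dvd_imp_le)

lemma fact_mod_ring_neq_0:
  assumes "x < CARD('p::prime_card)"
  shows "(of_nat (fact x) :: 'p mod_ring) \<noteq> 0"
  using assms prime_card[where 'a = 'p] by (simp add: of_nat_eq_0_iff_char_dvd prime_dvd_fact_iff)

lemma Mres_bounds:
  assumes "prime q" "q < CARD('p::prime_card)" "0 < m" "m < q"
  shows "0 < Mres TYPE('p) q m \<and> Mres TYPE('p) q m < CARD('p)"
proof -
  have "(of_nat m :: 'p mod_ring) \<noteq> 0"
    using assms by (intro of_nat_mod_ring_neq_0) auto
  moreover have "(of_nat q :: 'p mod_ring) \<noteq> 0"
    using assms prime_gt_0_nat[of q] by (intro of_nat_mod_ring_neq_0) auto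
  ultimately have "- (of_nat m :: 'p mod_ring) / of_nat q \<noteq> 0" by simp
  moreover obtain k where k: "k < CARD('p)" "- (of_nat m :: 'p mod_ring) / of_nat q = of_nat k"
    using surj_of_nat_mod_ring by blast
  ultimately have P: "0 < k \<and> (of_nat k :: 'p mod_ring) = - of_nat m / of_nat q"
    by (cases k) auto
  have "Mres TYPE('p) q m \<le> k"
    unfolding Mres_def by (rule Least_le) (rule P)
  moreover have "0 < Mres TYPE('p) q m"
    unfolding Mres_def by (rule conjunct1[OF LeastI[of _ k]]) (rule P)
  ultimately show ?thesis using k by simp
qed

lemma fact_card_minus_1_mod_ring: "(of_nat (fact (CARD('p::prime_card) - 1)) :: 'p mod_ring) = - 1"
proof -
  have "[fact (CARD('p) - 1) = - 1] (mod int CARD('p))"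
    by (rule wilson_theorem[OF prime_card])
  then have "(of_int (fact (CARD('p) - 1)) :: 'p mod_ring) = of_int (- 1)"
    by (simp only: of_int_eq_iff_cong_CHAR semiring_char_mod_ring)
  then have "(of_int (int (fact (CARD('p) - 1))) :: 'p mod_ring) = of_int (- 1)"
    by (simp only: of_nat_fact)
  then show ?thesis by (simp del: of_nat_fact)
qed

lemma minus_one_power_card_minus_1_mod_ring: "(- 1 :: 'p::prime_card mod_ring) ^ (CARD('p) - 1) = 1"
proof (cases "CARD('p) = 2")
  case True
  have "(2 :: 'p mod_ring) = 0"
    using of_nat_card_eq_0[where 'a = 'p] True by simp
  then have "(- 1 :: 'p mod_ring) = 1"
    by (simp add: eq_neg_iff_add_eq_0 one_add_one)
  with True show ?thesis by simp
next
  case False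
  then have "odd (CARD('p))"
    using prime_card[where 'a = 'p] prime_ge_2_nat[of "CARD('p)"] by (intro prime_odd_nat) auto
  then show ?thesis by simp
qed

lemma GammaF_Suc: "GammaF (Suc x) = (- 1) ^ x * of_nat (fact x)"
  by (simp add: GammaF_def)

lemma GammaF_Suc_rec:
  assumes "0 < x"
  shows "GammaF (Suc x) = - of_nat x * GammaF x"
proof -
  obtain y where "x = Suc y" using assms by (cases x) auto
  then show ?thesis by (simp add: GammaF_def algebra_simps)
qed

(* The F_p analogue of Gamma(x) Gamma(1 - x) = pi / sin(pi x); the case n = 0 is Wilson's theorem. *)
lemma GammaF_reflection:
  assumes "n < CARD('p::prime_card)"
  shows "(GammaF (CARD('p) - n) * GammaF (Suc n) :: 'p mod_ring) = (- 1) ^ Suc n"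
  using assms
proof (induction n)
  case 0
  have "(GammaF (Suc (CARD('p) - 1)) :: 'p mod_ring) = - 1"
    unfolding GammaF_Suc fact_card_minus_1_mod_ring minus_one_power_card_minus_1_mod_ring by simp
  moreover have "Suc (CARD('p) - 1) = CARD('p)"
    using "0" by simp
  ultimately show ?case by (simp add: GammaF_def)
next
  case (Suc n)
  define c where "c = CARD('p) - Suc (Suc n)"
  have c: "CARD('p) - n = Suc (Suc c)" "CARD('p) - Suc n = Suc c"
    using Suc.prems by (simp_all add: c_def)
  have "(of_nat (Suc c + Suc n) :: 'p mod_ring) = 0"
    using Suc.prems by (simp add: c_def)
  then have Suc_c: "(of_nat (Suc c) :: 'p mod_ring) = - of_nat (Suc n)"
    by (simp only: of_nat_add eq_neg_iff_add_eq_0)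
  have left: "(GammaF (CARD('p) - n) :: 'p mod_ring) = of_nat (Suc n) * GammaF (CARD('p) - Suc n)"
    unfolding c GammaF_Suc_rec[OF zero_less_Suc] Suc_c by simp
  have right: "(GammaF (Suc (Suc n)) :: 'p mod_ring) = - of_nat (Suc n) * GammaF (Suc n)"
    by (intro GammaF_Suc_rec) simp
  have "(GammaF (CARD('p) - Suc n) * GammaF (Suc (Suc n)) :: 'p mod_ring) =
      - (GammaF (CARD('p) - n) * GammaF (Suc n))"
    unfolding left right by (simp add: algebra_simps)
  also have "\<dots> = (- 1) ^ Suc (Suc n)"
    using Suc by simp
  finally show ?case .
qed

lemma GammaF_ratio:
  assumes "s < M" "M < CARD('p::prime_card)"
  shows "(- 1) ^ M * (GammaF (M + 1) * GammaF (CARD('p) - (M - s) + 1) / GammaF (s + 1) :: 'p mod_ring) =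
    - ((- 1) ^ s * of_nat M * of_nat (M - 1 choose s))"
proof -
  define n where "n = M - s - 1"
  have n: "CARD('p) - (M - s) + 1 = CARD('p) - n" "n < CARD('p)"
    using assms by (simp_all add: n_def)
  have "(GammaF (CARD('p) - n) :: 'p mod_ring) * of_nat (fact n) =
      (- 1) ^ n * (GammaF (CARD('p) - n) * GammaF (Suc n))"
    by (simp add: GammaF_Suc mult_ac)
  also have "\<dots> = - 1"
    unfolding GammaF_reflection[OF n(2)] by simp
  finally have refl: "(GammaF (CARD('p) - n) :: 'p mod_ring) * of_nat (fact n) = - 1" .
  have "fact M = M * fact (M - 1)"
    using assms(1) by (simp add: fact_reduce)
  also have "fact (M - 1) = fact s * fact n * (M - 1 choose s)"
    using binomial_fact_lemma[of s "M - 1"] assms(1) by (simp add: n_def)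
  finally have fact_M: "(of_nat (fact M) :: 'p mod_ring) =
      of_nat M * of_nat (M - 1 choose s) * of_nat (fact s) * of_nat (fact n)"
    by (simp del: of_nat_fact)
  have "(- 1) ^ M * (GammaF (M + 1) * GammaF (CARD('p) - n)) =
      (of_nat (fact M) * GammaF (CARD('p) - n) :: 'p mod_ring)"
    by (simp add: GammaF_Suc)
  also have "\<dots> = of_nat M * of_nat (M - 1 choose s) * of_nat (fact s) * (GammaF (CARD('p) - n) * of_nat (fact n))"
    unfolding fact_M by (simp only: mult_ac)
  also have "\<dots> = - ((- 1) ^ s * of_nat M * of_nat (M - 1 choose s)) * GammaF (s + 1)"
    unfolding refl by (simp add: GammaF_Suc mult_ac)
  finally have "(- 1) ^ M * (GammaF (M + 1) * GammaF (CARD('p) - n)) =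
      - ((- 1) ^ s * of_nat M * of_nat (M - 1 choose s)) * (GammaF (s + 1) :: 'p mod_ring)" .
  moreover have "(GammaF (s + 1) :: 'p mod_ring) \<noteq> 0"
    using assms fact_mod_ring_neq_0[of s, where 'p = 'p] by (simp add: GammaF_Suc)
  ultimately show ?thesis
    unfolding n(1) by (simp add: field_simps)
qed

lemma GammaF_mod_ring_neq_0:
  assumes "0 < x" "x \<le> CARD('p::prime_card)"
  shows "(GammaF x :: 'p mod_ring) \<noteq> 0"
  using assms fact_mod_ring_neq_0[of "x - 1", where 'p = 'p] by (simp add: GammaF_def)

definition leading_coeff :: "nat \<Rightarrow> (nat \<Rightarrow> nat) \<Rightarrow> nat \<Rightarrow> nat \<Rightarrow> nat \<Rightarrow> nat \<Rightarrow> 'a::field" where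
  "leading_coeff n M p i s k = (- 1) ^ (\<Sum>j\<in>{1..i}. M j) *
     (GammaF (M i + 1) * GammaF (p - (M i - s) + 1) / GammaF (s + 1)) *
     ((if i < k \<and> k \<le> n then 1 / of_nat (\<Sum>j\<in>{i+1..n}. M j) else 0)
      - (if k = i then 1 / of_nat (M i) else 0))"

lemma leading_coeff_neq_0:
  assumes "0 < M i" "M i < CARD('p::prime_card)" "s < M i"
  shows "(leading_coeff n M CARD('p) i s i :: 'p mod_ring) \<noteq> 0"
proof -
  have "(GammaF (M i + 1) :: 'p mod_ring) \<noteq> 0" "(GammaF (CARD('p) - (M i - s) + 1) :: 'p mod_ring) \<noteq> 0"
      "(GammaF (s + 1) :: 'p mod_ring) \<noteq> 0"
    using assms by (intro GammaF_mod_ring_neq_0; simp)+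
  moreover have "(of_nat (M i) :: 'p mod_ring) \<noteq> 0"
    using assms by (intro of_nat_mod_ring_neq_0)
  ultimately show ?thesis by (simp add: leading_coeff_def)
qed

lemma of_nat_sum_Suc_mod_ring:
  fixes M :: "nat \<Rightarrow> nat"
  assumes "i \<le> n" "s < M i" "s + l * CARD('p::prime_card) = (\<Sum>j\<in>{i..n}. M j)"
  shows "(of_nat (\<Sum>j\<in>{i+1..n}. M j) :: 'p mod_ring) = - of_nat (M i - s)"
proof -
  have "(\<Sum>j\<in>{i+1..n}. M j) + (M i - s) = l * CARD('p)"
    using assms sum.atLeast_Suc_atMost[of i n M] by simp
  then have "(of_nat (\<Sum>j\<in>{i+1..n}. M j) :: 'p mod_ring) + of_nat (M i - s) = 0"
    by (metis of_nat_add of_nat_mult of_nat_card_eq_0 mult_zero_right)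
  then show ?thesis by (simp add: eq_neg_iff_add_eq_0)
qed

lemma Ivec_prefix_monom_eq_leading_coeff:
  fixes M :: "nat \<Rightarrow> nat"
  defines "p \<equiv> CARD('p::prime_card)"
  assumes M: "\<forall>j\<in>{1..n}. 0 < M j \<and> M j < p" and i: "i \<in> {1..n}" and "0 < l"
    and s: "s < M i" "s + l * p = (\<Sum>j\<in>{i..n}. M j)" and k: "k \<in> {1..n}"
  shows "(Ivec n M p l k (prefix_monom M i s) :: 'p mod_ring) = leading_coeff n M p i s k"
proof -
  define P where "P = (\<Sum>j\<in>{1..<i}. M j)"
  define C where "C = (of_nat (M i - 1 choose s) :: 'p mod_ring)"
  define R where "R = (GammaF (M i + 1) * GammaF (p - (M i - s) + 1) / GammaF (s + 1) :: 'p mod_ring)"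
  have Mi: "0 < M i" "M i < p" using M i by auto
  have lp: "0 < l * p" using \<open>0 < l\<close> Mi by simp
  have Mi_nz: "(of_nat (M i) :: 'p mod_ring) \<noteq> 0"
    using Mi unfolding p_def by (rule of_nat_mod_ring_neq_0)
  have sum_i: "(\<Sum>j\<in>{1..i}. M j) = P + M i"
    using i by (simp add: P_def sum.last_plus)
  have R: "R = (- 1) ^ M i * - ((- 1) ^ s * of_nat (M i) * C)"
    using GammaF_ratio[OF s(1) Mi(2)[unfolded p_def]] unfolding R_def C_def p_def
    by (metis left_minus_one_mult_self)
  have T: "(of_nat (\<Sum>j\<in>{i+1..n}. M j) :: 'p mod_ring) = - of_nat (M i - s)"
    using i s unfolding p_def by (intro of_nat_sum_Suc_mod_ring) auto
  have Ivec: "(Ivec n M p l k (prefix_monom M i s) :: 'p mod_ring) =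
      (- 1) ^ (P + s) * of_nat ((if k = i then M i - 1 else M i) choose s)" if "i \<le> k"
    unfolding P_def using M i k s that lp by (intro Ivec_prefix_monom) auto
  consider "k < i" | "k = i" | "i < k" by linarith
  then show ?thesis
  proof cases
    case 1
    with i k M show ?thesis unfolding leading_coeff_def by (simp add: Ivec_prefix_monom_below)
  next
    case 2
    then have ik: "i \<le> k" by simp
    show ?thesis
      using 2 Mi_nz unfolding Ivec[OF ik] leading_coeff_def R_def[symmetric] sum_i R C_def
      by (simp add: power_add field_simps)
  next
    case 3
    have "of_nat (M i choose s) * of_nat (M i - s) = (of_nat (M i) * C :: 'p mod_ring)"
      unfolding C_def by (metis binomial_absorb_comp mult.commute of_nat_mult)
    moreover have "(of_nat (M i - s) :: 'p mod_ring) \<noteq> 0"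
      using s Mi unfolding p_def by (intro of_nat_mod_ring_neq_0) auto
    ultimately show ?thesis
      using 3 k unfolding Ivec[OF less_imp_le[OF 3]] leading_coeff_def R_def[symmetric] sum_i R T
      by (simp add: power_add field_simps)
  qed
qed

lemma id_leading_term_Ivec:
  fixes M :: "nat \<Rightarrow> nat"
  defines "p \<equiv> CARD('p::prime_card)"
  assumes M: "\<forall>j\<in>{1..n}. 0 < M j \<and> M j < p" and i: "i \<in> {1..n}" and "0 < l"
    and s: "s < M i" "s + l * p = (\<Sum>j\<in>{i..n}. M j)"
  shows "id_leading_term n (\<lambda>k d. Ivec n M p l k d :: 'p mod_ring) (leading_coeff n M p i s)
    (prefix_monom M i s)"
proof -
  have "0 < M i" "M i < p" using M i by auto
  then have "(leading_coeff n M p i s i :: 'p mod_ring) \<noteq> 0" "0 < l * p"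
    using s(1) \<open>0 < l\<close> unfolding p_def by (simp_all add: leading_coeff_neq_0)
  moreover have "(Ivec n M p l k d :: 'p mod_ring) = 0"
    if "k \<in> {1..n}" "zmonom n d" "lex_less n (prefix_monom M i s) d" for k d
    using M i s that \<open>0 < l * p\<close> by (intro Ivec_eq_0_above_prefix_monom) auto
  ultimately show ?thesis
    unfolding id_leading_term_def p_def
    using i zmonom_prefix_monom[OF i] Ivec_prefix_monom_eq_leading_coeff[OF M[unfolded p_def] i \<open>0 < l\<close> s[unfolded p_def]]
    by blast
qed

lemma nat_sum_Suc_minus_multiple:
  fixes M :: "nat \<Rightarrow> nat"
  assumes "i \<le> n" "1 \<le> l" "s + l * p = (\<Sum>j\<in>{i..n}. M j)" "s < M i" "M i < p"
  shows "nat ((\<Sum>j\<in>{i+1..n}. int (M j)) - int ((l - 1) * p) + 1) = p - (M i - s) + 1"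
proof -
  have "(\<Sum>j\<in>{i..n}. M j) = M i + (\<Sum>j\<in>{i+1..n}. M j)"
    using assms(1) by (simp add: sum.atLeast_Suc_atMost)
  moreover have "int ((l - 1) * p) = int (l * p) - int p"
    using assms(2) by (simp add: diff_mult_distrib of_nat_diff)
  ultimately have "(\<Sum>j\<in>{i+1..n}. int (M j)) - int ((l - 1) * p) + 1 = int (p - (M i - s) + 1)"
    using assms(3-5) unfolding of_nat_sum[symmetric] by arith
  then show ?thesis by simp
qed

theorem theorem6p1:
  fixes q n l i :: nat and m :: "nat \<Rightarrow> nat"
  defines "p \<equiv> CARD('p::prime_card)"
  defines "M \<equiv> (\<lambda>j. Mres TYPE('p) q (m j))"
  defines "r \<equiv> (\<Sum>j\<in>{1..n}. M j) div p"
  assumes "prime q" and "p > n" and "n \<ge> 2" and "p > q"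
    and "\<forall>j\<in>{1..n}. 0 < m j \<and> m j < q"
    and "1 \<le> l" and "l \<le> r"
    and "0 < i"
    and "0 \<le> (\<Sum>j\<in>{i..n}. int (M j)) - int (l * p)"
    and "(\<Sum>j\<in>{i..n}. int (M j)) - int (l * p) < int (M i)"
  shows "id_leading_term n
     (\<lambda>k d. Ivec n M p l k d :: 'p mod_ring)
     (\<lambda>k. (-1) ^ (\<Sum>j\<in>{1..i}. M j) *
          (GammaF (M i + 1) *
           GammaF (nat ((\<Sum>j\<in>{i+1..n}. int (M j)) - int ((l - 1) * p) + 1)) /
           GammaF (nat ((\<Sum>j\<in>{i..n}. int (M j)) - int (l * p) + 1))) *
          ((if i < k \<and> k \<le> n then 1 / of_nat (\<Sum>j\<in>{i+1..n}. M j) else 0)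
           - (if k = i then 1 / of_nat (M i) else 0)))
     ((\<Sum>j\<in>{1..<i}. Poly_Mapping.single j (M j)) +
      Poly_Mapping.single i (nat ((\<Sum>j\<in>{i..n}. int (M j)) - int (l * p))))"
proof -
  have M_bounds: "\<forall>j\<in>{1..n}. 0 < M j \<and> M j < p"
    using assms(4,7,8) Mres_bounds unfolding M_def p_def by blast
  have le: "l * p \<le> (\<Sum>j\<in>{i..n}. M j)" and lt: "(\<Sum>j\<in>{i..n}. M j) < l * p + M i"
    using assms(12,13) unfolding of_nat_sum[symmetric] by linarith+
  define s where "s = (\<Sum>j\<in>{i..n}. M j) - l * p"
  have s: "s + l * p = (\<Sum>j\<in>{i..n}. M j)" "s < M i"
    using le lt unfolding s_def by linarith+
  have s_int: "nat ((\<Sum>j\<in>{i..n}. int (M j)) - int (l * p)) = s"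
    unfolding s_def of_nat_sum[symmetric] of_nat_diff[OF le, symmetric] nat_int ..
  have "0 < l * p" using assms(5,9) by simp
  then have "i \<le> n" using s(1) by (cases "i \<le> n") auto
  then have i: "i \<in> {1..n}" using assms(11) by simp
  have Gamma_arg_num: "nat ((\<Sum>j\<in>{i+1..n}. int (M j)) - int ((l - 1) * p) + 1) = p - (M i - s) + 1"
    using M_bounds i s assms(9) by (intro nat_sum_Suc_minus_multiple) auto
  have Gamma_arg_den: "nat ((\<Sum>j\<in>{i..n}. int (M j)) - int (l * p) + 1) = s + 1"
    using s_int assms(12) by linarith
  have "0 < l" using assms(9) by simp
  from id_leading_term_Ivec[OF M_bounds[unfolded p_def] i this s(2) s(1)[unfolded p_def], folded p_def]
  show ?thesis
    unfolding Gamma_arg_num Gamma_arg_den s_int leading_coeff_def[abs_def] prefix_monom_def .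
qed

end
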